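(* Let $G=\langle c,s\rangle$ and $K$ be as in the context, let $n\ge1$ and let $\gamma,\gamma_1,\ldots,\gamma_n,\beta_1,\ldots,\beta_n$ be integers. For $i=1,\ldots,n$ let $B_i=\{j:\gamma_j=\gamma_i\}$, let $\gamma_0=\max\{|\gamma_1|,\ldots,|\gamma_n|\}$, and let $F=(c^{s^{\gamma_1}})^{\beta_1}\cdots(c^{s^{\gamma_n}})^{\beta_n}\in K^{\langle s\rangle}$, regarded as a function $\langle s\rangle\to K$. Then the element $w=F s^{\gamma}$ is trivial in $G$ if and only if $\gamma=0$, $\sum_{j\in B_i}\beta_j=0$ for $i=1,\ldots,n$, and $F(s^{\mu})=1$ in $K$ for all integers $\mu$ with $-3\gamma_0\le\mu\le3\gamma_0$.
   Context: Notation: $x^y=yxy^{-1}$. For groups $A,B$, the wreath product $A\,\mathrm{Wr}\,B$ is the semidirect product $A^B\rtimes B$, where $A^B$ is the group of all functions $B\to A$ with pointwise multiplication and $B$ acts by $(bf)(x)=f(xb)$, written $f^b=bfb^{-1}$. $H$ is a group generated by a countable set $\{a^{(1)},a^{(2)},\ldots\}$. Let $Z=\langle z\rangle$ be infinite cyclic and $b^{(i)}\in H^Z$ with $b^{(i)}(z^k)=a^{(i)}$ if $k>0$ and $1$ otherwise; $K=\langle z,b^{(i)}\ (i\in\mathbb{N})\rangle\le H\,\mathrm{Wr}\,Z$. Let $\langle s\rangle$ be infinite cyclic and $c\in K^{\langle s\rangle}$ with $c(s)=z$, $c(s^{2^i})=b^{(i)}$ for $i>0$, $c(s^k)=1$ otherwise;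 $G=\langle c,s\rangle\le K\,\mathrm{Wr}\,\langle s\rangle$. *)

theory Defs
  imports "HOL-Algebra.Algebra"
begin

text \<open>Unrestricted wreath product  A Wr Z  with Z infinite cyclic, identified with int
  (the element z^k is represented by k).  An element f z^k is the pair (f,k), with
  f : Z \<rightarrow> A arbitrary.  The action is (b f)(x) = f(x b), so
  (f,k)(g,l) = (f \<cdot> (z^k g), k+l) with (z^k g)(x) = g(x+k).\<close>

definition wreath :: "('a,'b) monoid_scheme \<Rightarrow> ((int \<Rightarrow> 'a) \<times> int) monoid" where
  "wreath A = \<lparr>carrier = {(f,k). \<forall>x. f x \<in> carrier A},
     monoid.mult = (\<lambda>(f,k) (g,l). (\<lambda>x. f x \<otimes>\<^bsub>A\<^esub> g (x + k), k + l)),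
     monoid.one = (\<lambda>_. \<one>\<^bsub>A\<^esub>, 0)\<rparr>"

definition conjg :: "('a,'b) monoid_scheme \<Rightarrow> 'a \<Rightarrow> 'a \<Rightarrow> 'a" where
  "conjg M x y = y \<otimes>\<^bsub>M\<^esub> x \<otimes>\<^bsub>M\<^esub> inv\<^bsub>M\<^esub> y"

definition zgen :: "('a,'b) monoid_scheme \<Rightarrow> (int \<Rightarrow> 'a) \<times> int" where
  "zgen H = (\<lambda>_. \<one>\<^bsub>H\<^esub>, 1)"

definition bgen :: "('a,'b) monoid_scheme \<Rightarrow> (nat \<Rightarrow> 'a) \<Rightarrow> nat \<Rightarrow> (int \<Rightarrow> 'a) \<times> int" where
  "bgen H a i = (\<lambda>k. if k > 0 then a i else \<one>\<^bsub>H\<^esub>, 0)"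

definition Kgrp :: "('a,'b) monoid_scheme \<Rightarrow> (nat \<Rightarrow> 'a) \<Rightarrow> ((int \<Rightarrow> 'a) \<times> int) monoid" where
  "Kgrp H a = (wreath H)\<lparr>carrier := generate (wreath H) (insert (zgen H) (bgen H a ` {1..}))\<rparr>"

text \<open>The ambient group K Wr <s>, s^k represented by k.\<close>
definition Wgrp where "Wgrp H a = wreath (Kgrp H a)"

definition sgen where "sgen H a = ((\<lambda>_. \<one>\<^bsub>Kgrp H a\<^esub>), (1::int))"

definition cgen where
  "cgen H a = ((\<lambda>k::int. if k = 1 then zgen H
       else if (\<exists>i::nat. i > 0 \<and> k = 2 ^ i) then bgen H a (SOME i::nat. i > 0 \<and> k = 2 ^ i)
       else \<one>\<^bsub>Kgrp H a\<^esub>), (0::int))"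

definition Fword where
  "Fword H a n gam bet = foldr (\<lambda>j acc.
       (conjg (Wgrp H a) (cgen H a) (sgen H a [^]\<^bsub>Wgrp H a\<^esub> (gam j :: int))) [^]\<^bsub>Wgrp H a\<^esub> (bet j :: int)
         \<otimes>\<^bsub>Wgrp H a\<^esub> acc)
     [1..<Suc n] \<one>\<^bsub>Wgrp H a\<^esub>"

end

theory Submission imports Defs begin

text \<open>Write \<open>F = (\<Phi>, 0)\<close>, so that \<open>\<Phi>(x) = \<Prod>\<^sub>j c(x + \<gamma>\<^sub>j)\<^bsup>\<beta>\<^sub>j\<^esup>\<close>; the relation \<open>F s\<^sup>\<gamma> = 1\<close> means
  \<open>\<gamma> = 0\<close> and \<open>\<Phi> \<equiv> 1\<close>. The coordinate function \<open>c\<close> is supported on the powers of two,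
  and its \<open>Z\<close>-component is the indicator of \<open>1\<close>. Reading off the \<open>Z\<close>-component of
  \<open>\<Phi>(1 - \<gamma>\<^sub>i)\<close> gives the block sum over \<open>B\<^sub>i\<close>, so the block sums must vanish. Conversely, for
  \<open>x < -3\<gamma>\<^sub>0\<close> all arguments \<open>x + \<gamma>\<^sub>j\<close> are negative, and for \<open>x > 3\<gamma>\<^sub>0\<close> they lie in a window of
  width \<open>2\<gamma>\<^sub>0\<close> above \<open>2\<gamma>\<^sub>0\<close>, which contains at most one power of two; that power is hit
  exactly by the indices of one block, so \<open>\<Phi>(x)\<close> is a power of a single element with
  exponent a vanishing block sum.\<close>

lemma wreath_carrier_iff [simp]:
  "(f, k) \<in> carrier (wreath A) \<longleftrightarrow> (\<forall>x. f x \<in> carrier A)"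
  by (simp add: wreath_def)

lemma wreath_mult [simp]:
  "(f, k) \<otimes>\<^bsub>wreath A\<^esub> (g, l) = (\<lambda>x. f x \<otimes>\<^bsub>A\<^esub> g (x + k), k + l)"
  by (simp add: wreath_def)

lemma wreath_one: "\<one>\<^bsub>wreath A\<^esub> = (\<lambda>_. \<one>\<^bsub>A\<^esub>, 0)"
  by (simp add: wreath_def)

lemma group_wreath:
  assumes "group A"
  shows "group (wreath A)"
proof (rule groupI)
  interpret A: group A by fact
  show "x \<otimes>\<^bsub>wreath A\<^esub> y \<in> carrier (wreath A)"
    if "x \<in> carrier (wreath A)" "y \<in> carrier (wreath A)" for x y
    using that by (cases x; cases y) auto
  show "\<one>\<^bsub>wreath A\<^esub> \<in> carrier (wreath A)"
    by (simp add: wreath_one)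
  show "x \<otimes>\<^bsub>wreath A\<^esub> y \<otimes>\<^bsub>wreath A\<^esub> z = x \<otimes>\<^bsub>wreath A\<^esub> (y \<otimes>\<^bsub>wreath A\<^esub> z)"
    if "x \<in> carrier (wreath A)" "y \<in> carrier (wreath A)" "z \<in> carrier (wreath A)" for x y z
    using that by (cases x; cases y; cases z) (auto simp: A.m_assoc add.assoc)
  show "\<one>\<^bsub>wreath A\<^esub> \<otimes>\<^bsub>wreath A\<^esub> x = x" if "x \<in> carrier (wreath A)" for x
    using that by (cases x) (auto simp: wreath_one)
  show "\<exists>y\<in>carrier (wreath A). y \<otimes>\<^bsub>wreath A\<^esub> x = \<one>\<^bsub>wreath A\<^esub>"
    if "x \<in> carrier (wreath A)" for x
  proof (cases x)
    case (Pair f k)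
    with that show ?thesis
      by (intro bexI[of _ "(\<lambda>x. inv\<^bsub>A\<^esub> f (x - k), -k)"]) (auto simp: wreath_one)
  qed
qed

lemma wreath_inv:
  assumes "group A" and "\<forall>x. f x \<in> carrier A"
  shows "inv\<^bsub>wreath A\<^esub> (f, k) = (\<lambda>x. inv\<^bsub>A\<^esub> f (x - k), -k)"
proof -
  interpret A: group A by fact
  interpret W: group "wreath A" by (rule group_wreath) fact
  show ?thesis
    by (rule W.inv_equality) (use assms(2) in \<open>auto simp: wreath_one\<close>)
qed

lemma wreath_int_pow_base:
  assumes "group A" and f: "\<forall>x. f x \<in> carrier A"
  shows "(f, 0) [^]\<^bsub>wreath A\<^esub> (m::int) = (\<lambda>x. f x [^]\<^bsub>A\<^esub> m, 0)"
proof -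
  interpret A: group A by fact
  have nat_pow: "(f, 0) [^]\<^bsub>wreath A\<^esub> (k::nat) = (\<lambda>x. f x [^]\<^bsub>A\<^esub> k, 0)" for k
    by (induction k) (simp_all add: wreath_one)
  show ?thesis
    using f by (simp add: int_pow_def2[where z=m] nat_pow wreath_inv[OF assms(1)] del: pow_nat)
qed

lemma wreath_int_pow_shift:
  assumes "group A"
  shows "(\<lambda>_. \<one>\<^bsub>A\<^esub>, 1) [^]\<^bsub>wreath A\<^esub> (m::int) = (\<lambda>_. \<one>\<^bsub>A\<^esub>, m)"
proof -
  interpret A: group A by fact
  have nat_pow: "(\<lambda>_. \<one>\<^bsub>A\<^esub>, 1::int) [^]\<^bsub>wreath A\<^esub> (k::nat) = (\<lambda>_. \<one>\<^bsub>A\<^esub>, int k)" for k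
    by (induction k) (auto simp: wreath_one)
  show ?thesis
    by (simp add: int_pow_def2[where z=m] nat_pow wreath_inv[OF assms] del: pow_nat)
qed

lemma wreath_conjg_shift:
  assumes "group A" and "\<forall>x. f x \<in> carrier A"
  shows "conjg (wreath A) (f, 0) (\<lambda>_. \<one>\<^bsub>A\<^esub>, m) = (\<lambda>x. f (x + m), 0)"
proof -
  interpret A: group A by fact
  show ?thesis
    using assms(2) by (simp add: conjg_def wreath_inv[OF assms(1)])
qed

lemma wreath_foldr_base:
  "foldr (\<lambda>j acc. (g j, 0::int) \<otimes>\<^bsub>wreath A\<^esub> acc) xs \<one>\<^bsub>wreath A\<^esub>
     = (\<lambda>x. foldr (\<lambda>j acc. g j x \<otimes>\<^bsub>A\<^esub> acc) xs \<one>\<^bsub>A\<^esub>, 0)"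
  by (induction xs) (auto simp: wreath_one)

lemma foldr_int_pow_indicator:
  assumes "group G" and "e \<in> carrier G"
    and "\<And>j. j \<in> set xs \<Longrightarrow> g j = (if P j then e else \<one>\<^bsub>G\<^esub>)"
  shows "foldr (\<lambda>j acc. g j [^]\<^bsub>G\<^esub> (b j :: int) \<otimes>\<^bsub>G\<^esub> acc) xs \<one>\<^bsub>G\<^esub>
           = e [^]\<^bsub>G\<^esub> (\<Sum>j\<leftarrow>xs. if P j then b j else 0)"
proof -
  interpret G: group G by fact
  show ?thesis
    using assms(3) by (induction xs) (auto simp: G.int_pow_mult assms(2))
qed

lemma snd_int_pow:
  assumes "group G" and snd_mult: "\<And>x y. snd (x \<otimes>\<^bsub>G\<^esub> y) = snd x + snd (y :: 'c \<times> int)"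
    and "x \<in> carrier G"
  shows "snd (x [^]\<^bsub>G\<^esub> (m::int)) = m * snd x"
proof -
  interpret G: group G by fact
  have snd_one: "snd \<one>\<^bsub>G\<^esub> = 0"
    using snd_mult[of "\<one>\<^bsub>G\<^esub>" "\<one>\<^bsub>G\<^esub>"] G.l_one[OF G.one_closed]
    by (metis add_cancel_right_right)
  have snd_nat_pow: "snd (x [^]\<^bsub>G\<^esub> (k::nat)) = int k * snd x" for k
    by (induction k) (simp_all add: snd_one snd_mult algebra_simps)
  have snd_inv: "snd (inv\<^bsub>G\<^esub> y) = - snd y" if "y \<in> carrier G" for y
    using snd_mult[of y "inv\<^bsub>G\<^esub> y"] G.r_inv[OF that] snd_one by simp
  show ?thesis
    using assms(3) by (simp add: int_pow_def2[where z=m] snd_nat_pow snd_inv del: pow_nat)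
qed

lemma snd_foldr_int_pow:
  assumes "group G" and snd_mult: "\<And>x y. snd (x \<otimes>\<^bsub>G\<^esub> y) = snd x + snd (y :: 'c \<times> int)"
    and "\<And>j. g j \<in> carrier G"
  shows "snd (foldr (\<lambda>j acc. g j [^]\<^bsub>G\<^esub> (b j :: int) \<otimes>\<^bsub>G\<^esub> acc) xs \<one>\<^bsub>G\<^esub>)
           = (\<Sum>j\<leftarrow>xs. b j * snd (g j))"
proof -
  interpret G: group G by fact
  have "snd \<one>\<^bsub>G\<^esub> = 0"
    using snd_mult[of "\<one>\<^bsub>G\<^esub>" "\<one>\<^bsub>G\<^esub>"] G.l_one[OF G.one_closed]
    by (metis add_cancel_right_right)
  then show ?thesis
    by (induction xs) (simp_all add: snd_mult snd_int_pow[OF assms])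
qed

lemma power_of_two_eq_if_close:
  assumes "(2::int) ^ p > 2 * g" and "(2::int) ^ q > 2 * g" and "\<bar>(2::int) ^ p - 2 ^ q\<bar> \<le> 2 * g"
  shows "p = q"
proof (rule ccontr)
  assume "p \<noteq> q"
  then consider "p < q" | "q < p" by linarith
  then show False
  proof cases
    case 1
    then have "(2::int) ^ q \<ge> 2 ^ Suc p" by (intro power_increasing) auto
    then show False using assms by auto
  next
    case 2
    then have "(2::int) ^ p \<ge> 2 ^ Suc q" by (intro power_increasing) auto
    then show False using assms by auto
  qed
qed

lemma sum_list_upt_if_eq_sum_filter:
  "(\<Sum>j\<leftarrow>[1..<Suc n]. if P j then f j else 0) = (\<Sum>j\<in>{j\<in>{1..n}. P j}. f j)"
  unfolding sum.inter_filter[OF finite_atLeastAtMost] sum_set_upt_conv_sum_list_nat[symmetric]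
    set_upt atLeastLessThanSuc_atLeastAtMost ..

lemma Kgrp_one: "\<one>\<^bsub>Kgrp H a\<^esub> = (\<lambda>_. \<one>\<^bsub>H\<^esub>, 0)"
  by (simp add: Kgrp_def wreath_one)

lemma snd_Kgrp_mult: "snd (x \<otimes>\<^bsub>Kgrp H a\<^esub> y) = snd x + snd y"
  by (cases x; cases y) (simp add: Kgrp_def)

lemma group_Kgrp:
  assumes "group H" and "a ` {1..} \<subseteq> carrier H"
  shows "group (Kgrp H a)"
proof -
  interpret H: group H by fact
  have "insert (zgen H) (bgen H a ` {1..}) \<subseteq> carrier (wreath H)"
    using assms(2) by (auto simp: zgen_def bgen_def)
  then have "subgroup (generate (wreath H) (insert (zgen H) (bgen H a ` {1..}))) (wreath H)"
    by (intro group.generate_is_subgroup group_wreath assms(1))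
  then show ?thesis
    unfolding Kgrp_def by (rule subgroup.subgroup_is_group) (rule group_wreath[OF assms(1)])
qed

lemma cgen_base: "cgen H a = (fst (cgen H a), 0)"
  by (simp add: cgen_def)

lemma cgen_in_carrier: "fst (cgen H a) k \<in> carrier (Kgrp H a)"
proof -
  have gen: "x \<in> insert (zgen H) (bgen H a ` {1..}) \<Longrightarrow> x \<in> carrier (Kgrp H a)" for x
    unfolding Kgrp_def by (simp add: generate.incl)
  have one: "\<one>\<^bsub>Kgrp H a\<^esub> \<in> carrier (Kgrp H a)"
    unfolding Kgrp_def by (simp add: generate.one)
  have "(SOME i::nat. i > 0 \<and> k = 2 ^ i) > 0" if "\<exists>i::nat. i > 0 \<and> k = 2 ^ i"
    using someI_ex[OF that] by blast
  with one show ?thesis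
    by (auto simp: cgen_def intro!: gen)
qed

lemma cgen_trivial:
  assumes "\<nexists>i::nat. k = 2 ^ i"
  shows "fst (cgen H a) k = \<one>\<^bsub>Kgrp H a\<^esub>"
proof -
  have "k \<noteq> 1" and "\<nexists>i::nat. i > 0 \<and> k = 2 ^ i"
    using assms by (metis power_0, blast)
  then show ?thesis
    unfolding cgen_def by (simp only: if_False fst_conv)
qed

lemma snd_cgen: "snd (fst (cgen H a) k) = (if k = 1 then 1 else 0)"
  by (simp add: cgen_def zgen_def bgen_def Kgrp_one)

definition Fcoord :: "('a,'b) monoid_scheme \<Rightarrow> (nat \<Rightarrow> 'a) \<Rightarrow> nat \<Rightarrow> (nat \<Rightarrow> int) \<Rightarrow> (nat \<Rightarrow> int)
    \<Rightarrow> int \<Rightarrow> (int \<Rightarrow> 'a) \<times> int" where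
  "Fcoord H a n gam bet x = foldr (\<lambda>j acc.
       fst (cgen H a) (x + gam j) [^]\<^bsub>Kgrp H a\<^esub> bet j \<otimes>\<^bsub>Kgrp H a\<^esub> acc)
     [1..<Suc n] \<one>\<^bsub>Kgrp H a\<^esub>"

lemma Fcoord_in_carrier:
  assumes "group H" and "a ` {1..} \<subseteq> carrier H"
  shows "Fcoord H a n gam bet x \<in> carrier (Kgrp H a)"
proof -
  interpret K: group "Kgrp H a" by (rule group_Kgrp) fact+
  have "foldr (\<lambda>j acc. fst (cgen H a) (x + gam j) [^]\<^bsub>Kgrp H a\<^esub> bet j \<otimes>\<^bsub>Kgrp H a\<^esub> acc)
          xs \<one>\<^bsub>Kgrp H a\<^esub> \<in> carrier (Kgrp H a)" for xs
    by (induction xs) (simp_all add: cgen_in_carrier)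
  then show ?thesis
    by (simp add: Fcoord_def)
qed

lemma Fword_eq:
  assumes "group H" and "a ` {1..} \<subseteq> carrier H"
  shows "Fword H a n gam bet = (Fcoord H a n gam bet, 0)"
proof -
  have K: "group (Kgrp H a)" by (rule group_Kgrp) fact+
  have "(conjg (Wgrp H a) (cgen H a) (sgen H a [^]\<^bsub>Wgrp H a\<^esub> m)) [^]\<^bsub>Wgrp H a\<^esub> b
          = (\<lambda>x. fst (cgen H a) (x + m) [^]\<^bsub>Kgrp H a\<^esub> b, 0)" for m b :: int
    unfolding Wgrp_def sgen_def wreath_int_pow_shift[OF K]
    by (subst cgen_base, subst wreath_conjg_shift[OF K])
       (simp_all add: cgen_in_carrier wreath_int_pow_base[OF K])
  then show ?thesis
    unfolding Fword_def Fcoord_def by (simp add: Wgrp_def wreath_foldr_base)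
qed

lemma snd_Fcoord:
  assumes "group H" and "a ` {1..} \<subseteq> carrier H"
  shows "snd (Fcoord H a n gam bet x) = (\<Sum>j\<in>{j\<in>{1..n}. x + gam j = 1}. bet j)"
proof -
  have "snd (Fcoord H a n gam bet x) = (\<Sum>j\<leftarrow>[1..<Suc n]. bet j * snd (fst (cgen H a) (x + gam j)))"
    unfolding Fcoord_def
    by (rule snd_foldr_int_pow[OF group_Kgrp[OF assms] snd_Kgrp_mult cgen_in_carrier])
  also have "\<dots> = (\<Sum>j\<leftarrow>[1..<Suc n]. if x + gam j = 1 then bet j else 0)"
    by (intro arg_cong[where f = sum_list] map_cong) (simp_all add: snd_cgen)
  finally show ?thesis
    by (simp only: sum_list_upt_if_eq_sum_filter)
qed

lemma Fcoord_eq_one_if_no_power_of_two: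
  assumes "group H" and "a ` {1..} \<subseteq> carrier H"
    and "\<forall>j\<in>{1..n}. \<nexists>i::nat. x + gam j = 2 ^ i"
  shows "Fcoord H a n gam bet x = \<one>\<^bsub>Kgrp H a\<^esub>"
proof -
  interpret K: group "Kgrp H a" by (rule group_Kgrp) fact+
  have "Fcoord H a n gam bet x = \<one>\<^bsub>Kgrp H a\<^esub> [^]\<^bsub>Kgrp H a\<^esub> (\<Sum>j\<leftarrow>[1..<Suc n]. if False then bet j else 0)"
    unfolding Fcoord_def
    by (rule foldr_int_pow_indicator[OF K.is_group K.one_closed]) (use assms(3) in \<open>auto simp: cgen_trivial\<close>)
  then show ?thesis
    by simp
qed

lemma Fcoord_eq_one_below:
  assumes "group H" and "a ` {1..} \<subseteq> carrier H"
    and "\<forall>j\<in>{1..n}. \<bar>gam j\<bar> \<le> g" and "x < - g"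
  shows "Fcoord H a n gam bet x = \<one>\<^bsub>Kgrp H a\<^esub>"
proof (rule Fcoord_eq_one_if_no_power_of_two[OF assms(1,2)], intro ballI notI)
  fix j assume "j \<in> {1..n}" and "\<exists>i::nat. x + gam j = 2 ^ i"
  moreover from \<open>j \<in> {1..n}\<close> assms(3,4) have "x + gam j < 0"
    by force
  ultimately show False
    by auto
qed

lemma Fcoord_eq_one_above:
  assumes "group H" and "a ` {1..} \<subseteq> carrier H"
    and bound: "\<forall>j\<in>{1..n}. \<bar>gam j\<bar> \<le> g" and "x > 3 * g"
    and block_sums: "\<forall>i\<in>{1..n}. (\<Sum>j\<in>{j\<in>{1..n}. gam j = gam i}. bet j) = 0"
  shows "Fcoord H a n gam bet x = \<one>\<^bsub>Kgrp H a\<^esub>"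
proof (cases "\<exists>j0\<in>{1..n}. \<exists>p::nat. x + gam j0 = 2 ^ p")
  case False
  then show ?thesis
    by (intro Fcoord_eq_one_if_no_power_of_two[OF assms(1,2)]) blast
next
  case True
  then obtain j0 p where j0: "j0 \<in> {1..n}" and p: "x + gam j0 = 2 ^ p"
    by blast
  interpret K: group "Kgrp H a" by (rule group_Kgrp) fact+
  \<comment> \<open>Only the block of \<open>j0\<close> meets a power of two: all arguments exceed \<open>2g\<close> and lie within \<open>2g\<close> of each other.\<close>
  have factor: "fst (cgen H a) (x + gam j) = (if gam j = gam j0 then fst (cgen H a) (2 ^ p) else \<one>\<^bsub>Kgrp H a\<^esub>)"
    if "j \<in> set [1..<Suc n]" for j
  proof (cases "gam j = gam j0")
    case False
    have "\<nexists>q::nat. x + gam j = 2 ^ q"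
    proof
      assume "\<exists>q::nat. x + gam j = 2 ^ q"
      then obtain q where q: "x + gam j = 2 ^ q" ..
      have "\<bar>gam j\<bar> \<le> g" and "\<bar>gam j0\<bar> \<le> g"
        using bound that j0 by auto
      then have "p = q"
        by (intro power_of_two_eq_if_close[of g]) (use \<open>x > 3 * g\<close> in \<open>simp_all add: p[symmetric] q[symmetric]\<close>)
      with p q False show False
        by simp
    qed
    with False show ?thesis
      by (simp add: cgen_trivial)
  qed (use p in simp)
  have "Fcoord H a n gam bet x
      = fst (cgen H a) (2 ^ p) [^]\<^bsub>Kgrp H a\<^esub> (\<Sum>j\<leftarrow>[1..<Suc n]. if gam j = gam j0 then bet j else 0)"
    unfolding Fcoord_def by (rule foldr_int_pow_indicator[OF K.is_group cgen_in_carrier factor])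
  also have "(\<Sum>j\<leftarrow>[1..<Suc n]. if gam j = gam j0 then bet j else 0) = 0"
    using block_sums j0 by (simp only: sum_list_upt_if_eq_sum_filter)
  finally show ?thesis
    by simp
qed

lemma block_sums_if_Fcoord_trivial:
  assumes "group H" and "a ` {1..} \<subseteq> carrier H"
    and "\<forall>x. Fcoord H a n gam bet x = \<one>\<^bsub>Kgrp H a\<^esub>" and "i \<in> {1..n}"
  shows "(\<Sum>j\<in>{j\<in>{1..n}. gam j = gam i}. bet j) = 0"
proof -
  have "snd (Fcoord H a n gam bet (1 - gam i)) = 0"
    using assms(3) by (simp add: Kgrp_one)
  moreover have "{j\<in>{1..n}. 1 - gam i + gam j = 1} = {j\<in>{1..n}. gam j = gam i}"
    by auto
  ultimately show ?thesis
    by (simp add: snd_Fcoord[OF assms(1,2)])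
qed

lemma Fcoord_trivial_iff:
  assumes "group H" and "a ` {1..} \<subseteq> carrier H"
    and bound: "\<forall>j\<in>{1..n}. \<bar>gam j\<bar> \<le> g" and "0 \<le> g"
  shows "(\<forall>x. Fcoord H a n gam bet x = \<one>\<^bsub>Kgrp H a\<^esub>) \<longleftrightarrow>
           (\<forall>i\<in>{1..n}. (\<Sum>j\<in>{j\<in>{1..n}. gam j = gam i}. bet j) = 0)
         \<and> (\<forall>\<mu>. -3 * g \<le> \<mu> \<and> \<mu> \<le> 3 * g \<longrightarrow> Fcoord H a n gam bet \<mu> = \<one>\<^bsub>Kgrp H a\<^esub>)"
proof (intro iffI conjI ballI allI impI)
  assume "(\<forall>i\<in>{1..n}. (\<Sum>j\<in>{j\<in>{1..n}. gam j = gam i}. bet j) = 0)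
         \<and> (\<forall>\<mu>. -3 * g \<le> \<mu> \<and> \<mu> \<le> 3 * g \<longrightarrow> Fcoord H a n gam bet \<mu> = \<one>\<^bsub>Kgrp H a\<^esub>)"
  then have block_sums: "\<forall>i\<in>{1..n}. (\<Sum>j\<in>{j\<in>{1..n}. gam j = gam i}. bet j) = 0"
    and middle: "\<And>\<mu>. -3 * g \<le> \<mu> \<Longrightarrow> \<mu> \<le> 3 * g \<Longrightarrow> Fcoord H a n gam bet \<mu> = \<one>\<^bsub>Kgrp H a\<^esub>"
    by blast+
  fix x
  consider "x < -3 * g" | "-3 * g \<le> x \<and> x \<le> 3 * g" | "x > 3 * g"
    by linarith
  then show "Fcoord H a n gam bet x = \<one>\<^bsub>Kgrp H a\<^esub>"
  proof cases
    case 1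
    with \<open>0 \<le> g\<close> show ?thesis
      by (intro Fcoord_eq_one_below[OF assms(1,2) bound]) linarith
  next
    case 2
    then show ?thesis
      by (simp add: middle)
  next
    case 3
    then show ?thesis
      by (rule Fcoord_eq_one_above[OF assms(1,2) bound _ block_sums])
  qed
qed (use block_sums_if_Fcoord_trivial[OF assms(1,2)] in blast)+


theorem lemma4:
  fixes H :: "('a,'b) monoid_scheme" and a :: "nat \<Rightarrow> 'a"
    and n :: nat and \<gamma> :: int and gam bet :: "nat \<Rightarrow> int"
  assumes "group H"
    and "a ` {1..} \<subseteq> carrier H"
    and "generate H (a ` {1..}) = carrier H"
    and "n \<ge> 1"
  defines "F \<equiv> Fword H a n gam bet"
    and "\<gamma>0 \<equiv> Max ((\<lambda>j. \<bar>gam j\<bar>) ` {1..n})"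
  shows "F \<otimes>\<^bsub>Wgrp H a\<^esub> (sgen H a [^]\<^bsub>Wgrp H a\<^esub> \<gamma>) = \<one>\<^bsub>Wgrp H a\<^esub> \<longleftrightarrow>
           \<gamma> = 0
         \<and> (\<forall>i\<in>{1..n}. (\<Sum>j\<in>{j\<in>{1..n}. gam j = gam i}. bet j) = 0)
         \<and> (\<forall>\<mu>::int. -3 * \<gamma>0 \<le> \<mu> \<and> \<mu> \<le> 3 * \<gamma>0 \<longrightarrow> fst F \<mu> = \<one>\<^bsub>Kgrp H a\<^esub>)"
proof -
  interpret K: group "Kgrp H a" by (rule group_Kgrp) fact+
  have F: "F = (Fcoord H a n gam bet, 0)"
    unfolding F_def by (rule Fword_eq) fact+
  have "F \<otimes>\<^bsub>Wgrp H a\<^esub> (sgen H a [^]\<^bsub>Wgrp H a\<^esub> \<gamma>) = \<one>\<^bsub>Wgrp H a\<^esub> \<longleftrightarrow>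
      \<gamma> = 0 \<and> (\<forall>x. Fcoord H a n gam bet x = \<one>\<^bsub>Kgrp H a\<^esub>)"
    using Fcoord_in_carrier[OF assms(1,2)]
    by (auto simp: F Wgrp_def sgen_def wreath_int_pow_shift[OF K.is_group] wreath_one fun_eq_iff)
  moreover have bound: "\<forall>j\<in>{1..n}. \<bar>gam j\<bar> \<le> \<gamma>0"
    unfolding \<gamma>0_def by (auto intro: Max_ge)
  moreover have "0 \<le> \<gamma>0"
    using bound assms(4) by force
  ultimately show ?thesis
    by (simp add: Fcoord_trivial_iff[OF assms(1,2)] F)
qed

end
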